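(* Let $\varphi\colon\mathcal{M}\to\mathcal{X}$ be a smooth lift, $y\in\mathcal{M}$ and $x=\varphi(y)$. Then $\varphi$ satisfies "1 $\Rightarrow$ 1" at $y$ if and only if $\operatorname{im}\mathrm{D}\varphi(y)=\mathrm{T}_x\mathcal{X}$. Moreover, if $\varphi$ does not satisfy "1 $\Rightarrow$ 1" at $y$, there is a linear cost $f\colon\mathcal{E}\to\mathbb{R}$ such that $y$ is 1-critical for $g=f\circ\varphi$ on $\mathcal{M}$ but $x$ is not stationary for $f$ on $\mathcal{X}$.
   Context: Let $\mathcal{E}$ be a finite-dimensional real inner product space and $\mathcal{M}$ a smooth manifold. A smooth lift of $\mathcal{X}\subseteq\mathcal{E}$ is a smooth map $\varphi\colon\mathcal{M}\to\mathcal{E}$ with $\varphi(\mathcal{M})=\mathcal{X}$; $\mathrm{D}\varphi(y)\colon\mathrm{T}_y\mathcal{M}\to\mathcal{E}$ is its differential. The tangent cone to $\mathcal{X}$ at $x\in\mathcal{X}$ is $\mathrm{T}_x\mathcal{X}=\{\lim_{i\to\infty}(x_i-x)/\tau_i : x_i\in\mathcal{X},\ \tau_i>0,\ \tau_i\to0\}$. For a cone $K$, $K^*=\{u\in\mathcal{E}:\langle u,v\rangle\ge0\ \forall v\in K\}$. For differentiable $f\colon\mathcal{E}\to\mathbb{R}$, $x\in\mathcal{X}$ is stationary for $f$ on $\mathcal{X}$ if $\mathrm{D}f(x)[v]\ge0$ for all $v\in\mathrm{T}_x\mathcal{X}$, i.e. $\nabla f(x)\in(\mathrm{T}_x\mathcal{X})^*$.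 With $g=f\circ\varphi$, $y\in\mathcal{M}$ is 1-critical if $(g\circ c)'(0)=0$ for every smooth curve $c\colon\mathbb{R}\to\mathcal{M}$ with $c(0)=y$. The lift satisfies "1 $\Rightarrow$ 1" at $y$ if for every differentiable $f$, whenever $y$ is 1-critical for $g$, $\varphi(y)$ is stationary for $f$ on $\mathcal{X}$. *)

theory Defs
  imports "HOL-Analysis.Analysis"
begin

text \<open>In finite dimensions this is exactly the usual notion of a C-infinity map.\<close>
coinductive smooth_on :: "'a::real_normed_vector set \<Rightarrow> ('a \<Rightarrow> 'b::real_normed_vector) \<Rightarrow> bool"
  for S :: "'a set" where
  "\<lbrakk>\<forall>x\<in>S. f differentiable (at x);
    \<forall>v. smooth_on S (\<lambda>x. frechet_derivative f (at x) v)\<rbrakk> \<Longrightarrow> smooth_on S f"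

text \<open>A smooth atlas on the topological space 'm (the manifold M is the whole type),
  modelled on the Euclidean space 'n.\<close>
definition smooth_atlas :: "('m::topological_space set \<times> ('m \<Rightarrow> 'n::euclidean_space)) set \<Rightarrow> bool" where
  "smooth_atlas A \<longleftrightarrow>
     \<Union>(fst ` A) = UNIV \<and>
     (\<forall>(U,\<psi>)\<in>A. open U \<and> open (\<psi> ` U) \<and> homeomorphism U (\<psi> ` U) \<psi> (inv_into U \<psi>)) \<and>
     (\<forall>(U,\<psi>)\<in>A. \<forall>(V,\<theta>)\<in>A. smooth_on (\<psi> ` (U \<inter> V)) (\<theta> \<circ> inv_into U \<psi>))"

definition smooth_map :: "('m::topological_space set \<times> ('m \<Rightarrow> 'n::euclidean_space)) set
    \<Rightarrow> ('m \<Rightarrow> 'e::real_normed_vector) \<Rightarrow> bool" where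
  "smooth_map A \<phi> \<longleftrightarrow> (\<forall>(U,\<psi>)\<in>A. smooth_on (\<psi> ` U) (\<phi> \<circ> inv_into U \<psi>))"

definition smooth_curve :: "('m::topological_space set \<times> ('m \<Rightarrow> 'n::euclidean_space)) set
    \<Rightarrow> (real \<Rightarrow> 'm) \<Rightarrow> bool" where
  "smooth_curve A c \<longleftrightarrow> continuous_on UNIV c \<and> (\<forall>(U,\<psi>)\<in>A. smooth_on (c -` U) (\<psi> \<circ> c))"

text \<open>The image of the differential D phi(y), computed in a chart around y
  (chart-independent).\<close>
definition diff_image :: "('m::topological_space set \<times> ('m \<Rightarrow> 'n::euclidean_space)) set
    \<Rightarrow> ('m \<Rightarrow> 'e::real_normed_vector) \<Rightarrow> 'm \<Rightarrow> 'e set" where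
  "diff_image A \<phi> y = (SOME W. \<exists>(U,\<psi>)\<in>A. y \<in> U \<and>
       W = range (frechet_derivative (\<phi> \<circ> inv_into U \<psi>) (at (\<psi> y))))"

definition tangent_cone :: "'e::real_normed_vector set \<Rightarrow> 'e \<Rightarrow> 'e set" where
  "tangent_cone X x = {v. \<exists>xs \<tau>. (\<forall>i. xs i \<in> X) \<and> (\<forall>i. \<tau> i > (0::real)) \<and>
       \<tau> \<longlonglongrightarrow> 0 \<and> (\<lambda>i. (1 / \<tau> i) *\<^sub>R (xs i - x)) \<longlonglongrightarrow> v}"

definition stationary :: "('e::real_normed_vector \<Rightarrow> real) \<Rightarrow> 'e set \<Rightarrow> 'e \<Rightarrow> bool" where
  "stationary f X x \<longleftrightarrow> (\<forall>v\<in>tangent_cone X x. frechet_derivative f (at x) v \<ge> 0)"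

definition one_critical :: "('m::topological_space set \<times> ('m \<Rightarrow> 'n::euclidean_space)) set
    \<Rightarrow> ('m \<Rightarrow> real) \<Rightarrow> 'm \<Rightarrow> bool" where
  "one_critical A g y \<longleftrightarrow>
     (\<forall>c. smooth_curve A c \<and> c 0 = y \<longrightarrow> ((g \<circ> c) has_real_derivative 0) (at 0))"

definition one_to_one :: "('m::topological_space set \<times> ('m \<Rightarrow> 'n::euclidean_space)) set
    \<Rightarrow> ('m \<Rightarrow> 'e::real_normed_vector) \<Rightarrow> 'm \<Rightarrow> bool" where
  "one_to_one A \<phi> y \<longleftrightarrow>
     (\<forall>f::'e \<Rightarrow> real. (\<forall>x. f differentiable (at x)) \<longrightarrow>
        one_critical A (f \<circ> \<phi>) y \<longrightarrow> stationary f (range \<phi>) (\<phi> y))"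

end

(* In a chart psi around y the differential of the lift is the linear map
   D = D(phi o psi^-1)(psi y). Its image lies in the tangent cone, since D w is the velocity of phi
   along the chart line t |-> psi y + t w. Conversely, the velocity of phi along a smooth curve
   through y lies in im D, and every D w is, up to a positive factor, such a velocity. Hence y is
   1-critical for f o phi iff Df(x) vanishes on im D. If im D is the whole tangent cone, this is
   stationarity. Otherwise some v in the cone lies outside the subspace im D and is separated from
   it by a functional f = -<z, .> vanishing on im D with f v < 0: a linear cost for which y is
   1-critical but x is not stationary. *)

theory Submission
  imports Defs
begin

section \<open>Smooth maps on open sets\<close>

lemma smooth_on_differentiable: "smooth_on S f \<Longrightarrow> x \<in> S \<Longrightarrow> f differentiable (at x)"
  by (erule smooth_on.cases) auto

lemma smooth_on_frechet_derivative:
  "smooth_on S f \<Longrightarrow> smooth_on S (\<lambda>x. frechet_derivative f (at x) v)"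
  by (erule smooth_on.cases) auto

lemma smooth_on_has_derivative:
  "smooth_on S f \<Longrightarrow> x \<in> S \<Longrightarrow> (f has_derivative frechet_derivative f (at x)) (at x)"
  using smooth_on_differentiable frechet_derivative_works by blast

lemma smooth_on_subset:
  assumes "smooth_on T f" "S \<subseteq> T"
  shows "smooth_on S f"
  using assms(1)
proof (coinduction arbitrary: f)
  case smooth_on
  then show ?case
    using assms(2) by (auto dest: smooth_on_differentiable smooth_on_frechet_derivative)
qed

lemma smooth_on_cong:
  assumes "open S" "smooth_on S f" "\<And>x. x \<in> S \<Longrightarrow> f x = g x"
  shows "smooth_on S g"
  using assms(2,3)
proof (coinduction arbitrary: f g)
  case smooth_on
  have g': "(g has_derivative frechet_derivative f (at x)) (at x)" if "x \<in> S" for x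
    using has_derivative_transform_within_open[OF smooth_on_has_derivative[OF smooth_on(1) that]
        assms(1) that] smooth_on(2) by blast
  then have "frechet_derivative g (at x) = frechet_derivative f (at x)" if "x \<in> S" for x
    using that frechet_derivative_at by metis
  then show ?case
    using g' smooth_on(1) by (auto simp: differentiable_def intro: smooth_on_frechet_derivative)
qed

lemma smooth_on_const: "smooth_on S (\<lambda>x. c)"
proof (coinduction arbitrary: c)
  case smooth_on
  have "frechet_derivative (\<lambda>x. c) (at x) = (\<lambda>v. 0)" for x
    using frechet_derivative_at[OF has_derivative_const] by metis
  then show ?case by auto
qed

lemma smooth_on_bounded_linear:
  assumes "bounded_linear g"
  shows "smooth_on S g"
proof (rule smooth_on.intros)
  have "frechet_derivative g (at x) = g" for x
    using frechet_derivative_at[OF bounded_linear_imp_has_derivative[OF assms]] by metis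
  then show "\<forall>v. smooth_on S (\<lambda>x. frechet_derivative g (at x) v)"
    by (simp add: smooth_on_const)
qed (use assms bounded_linear_imp_differentiable in blast)

lemma smooth_on_compose_bounded_linear:
  assumes "open S" "bounded_linear g" "smooth_on S f"
  shows "smooth_on S (\<lambda>x. g (f x))"
proof -
  have "smooth_on S F" if "smooth_on S f" "\<forall>x\<in>S. F x = g (f x)" for F f
    using that
  proof (coinduction arbitrary: F f)
    case smooth_on
    have F': "(F has_derivative (\<lambda>v. g (frechet_derivative f (at x) v))) (at x)" if "x \<in> S" for x
      using has_derivative_transform_within_open[OF bounded_linear.has_derivative[OF assms(2)
          smooth_on_has_derivative[OF smooth_on(1) that]] assms(1) that] smooth_on(2) by auto
    then have "frechet_derivative F (at x) v = g (frechet_derivative f (at x) v)" if "x \<in> S" for x v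
      using that frechet_derivative_at by metis
    then show ?case
      using F' smooth_on(1) by (auto simp: differentiable_def intro!: smooth_on_frechet_derivative)
  qed
  from this[OF assms(3)] show ?thesis by simp
qed

lemma has_derivative_sum_list:
  "(\<And>q. q \<in> set L \<Longrightarrow> (f q has_derivative f' q) F) \<Longrightarrow>
    ((\<lambda>x. \<Sum>q\<leftarrow>L. f q x) has_derivative (\<lambda>v. \<Sum>q\<leftarrow>L. f' q v)) F"
  by (induction L) (auto intro: has_derivative_add)

lemma sum_list_concat_map_pair:
  "(\<Sum>q\<leftarrow>concat (map (\<lambda>q. [f q, g q]) xs). k q) = (\<Sum>q\<leftarrow>xs. k (f q) + k (g q))"
  by (induction xs) (simp_all add: add.assoc)

(* Products are not closed under differentiation, but sums of products are (Leibniz rule);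
   that is the coinduction invariant. *)
lemma smooth_on_sum_list_scaleR:
  fixes L :: "(('a::real_normed_vector \<Rightarrow> real) \<times> ('a \<Rightarrow> 'b::real_normed_vector)) list"
  assumes "open S" "\<forall>q\<in>set L. smooth_on S (fst q) \<and> smooth_on S (snd q)"
  shows "smooth_on S (\<lambda>x. \<Sum>q\<leftarrow>L. fst q x *\<^sub>R snd q x)"
proof -
  have "smooth_on S F"
    if "\<forall>q\<in>set L. smooth_on S (fst q) \<and> smooth_on S (snd q)"
      "\<forall>x\<in>S. F x = (\<Sum>q\<leftarrow>L. fst q x *\<^sub>R snd q x)"
    for F L
    using that
  proof (coinduction arbitrary: F L)
    case smooth_on
    let ?D = "\<lambda>f x. frechet_derivative f (at x)"
    have F': "(F has_derivative (\<lambda>v. \<Sum>q\<leftarrow>L. fst q x *\<^sub>R ?D (snd q) x v + ?D (fst q) x v *\<^sub>R snd q x))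
        (at x)" if "x \<in> S" for x
    proof (rule has_derivative_transform_within_open[OF _ assms(1) that])
      show "((\<lambda>x. \<Sum>q\<leftarrow>L. fst q x *\<^sub>R snd q x) has_derivative
          (\<lambda>v. \<Sum>q\<leftarrow>L. fst q x *\<^sub>R ?D (snd q) x v + ?D (fst q) x v *\<^sub>R snd q x)) (at x)"
        using smooth_on(1) that
        by (intro has_derivative_sum_list) (auto intro!: has_derivative_scaleR smooth_on_has_derivative)
    qed (use smooth_on(2) in auto)
    have dF: "?D F x v = (\<Sum>q\<leftarrow>L. fst q x *\<^sub>R ?D (snd q) x v + ?D (fst q) x v *\<^sub>R snd q x)"
      if "x \<in> S" for x v
      using frechet_derivative_at[OF F'[OF that], symmetric] by simp
    have "\<exists>L'. (\<forall>q\<in>set L'. smooth_on S (fst q) \<and> smooth_on S (snd q)) \<and>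
        (\<forall>x\<in>S. ?D F x v = (\<Sum>q\<leftarrow>L'. fst q x *\<^sub>R snd q x))" for v
    proof (intro exI conjI)
      let ?L' = "concat (map (\<lambda>q. [(fst q, \<lambda>x. ?D (snd q) x v), (\<lambda>x. ?D (fst q) x v, snd q)]) L)"
      show "\<forall>q\<in>set ?L'. smooth_on S (fst q) \<and> smooth_on S (snd q)"
        using smooth_on(1) by (auto intro: smooth_on_frechet_derivative)
      show "\<forall>x\<in>S. ?D F x v = (\<Sum>q\<leftarrow>?L'. fst q x *\<^sub>R snd q x)"
        by (simp add: dF sum_list_concat_map_pair)
    qed
    moreover have "\<forall>x\<in>S. F differentiable (at x)"
      using F' unfolding differentiable_def by blast
    ultimately show ?case
      by auto
  qed
  from this[OF assms(2)] show ?thesis by simp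
qed

lemma smooth_on_scaleR:
  "open S \<Longrightarrow> smooth_on S p \<Longrightarrow> smooth_on S h \<Longrightarrow> smooth_on S (\<lambda>x. p x *\<^sub>R h x)"
  using smooth_on_sum_list_scaleR[of S "[(p, h)]"] by simp

lemma smooth_on_add:
  "open S \<Longrightarrow> smooth_on S f \<Longrightarrow> smooth_on S g \<Longrightarrow> smooth_on S (\<lambda>x. f x + g x)"
  using smooth_on_sum_list_scaleR[of S "[(\<lambda>x. 1, f), (\<lambda>x. 1, g)]"] by (simp add: smooth_on_const)

lemma smooth_on_diff:
  "open S \<Longrightarrow> smooth_on S f \<Longrightarrow> smooth_on S g \<Longrightarrow> smooth_on S (\<lambda>x. f x - g x)"
  using smooth_on_sum_list_scaleR[of S "[(\<lambda>x. 1, f), (\<lambda>x. - 1, g)]"] by (simp add: smooth_on_const)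

lemma smooth_on_sum:
  "open S \<Longrightarrow> (\<And>i. i \<in> I \<Longrightarrow> smooth_on S (f i)) \<Longrightarrow> smooth_on S (\<lambda>x. \<Sum>i\<in>I. f i x)"
  by (induction I rule: infinite_finite_induct) (auto intro: smooth_on_const smooth_on_add)

lemma smooth_on_frechet_derivative_apply:
  fixes V :: "'a::euclidean_space \<Rightarrow> 'a"
  assumes "open S" "smooth_on S f" "smooth_on S V"
  shows "smooth_on S (\<lambda>x. frechet_derivative f (at x) (V x))"
proof (rule smooth_on_cong[OF assms(1)])
  show "smooth_on S (\<lambda>x. \<Sum>i\<in>Basis. (V x \<bullet> i) *\<^sub>R frechet_derivative f (at x) i)"
    using assms smooth_on_compose_bounded_linear[OF assms(1) bounded_linear_inner_left assms(3)]
    by (intro smooth_on_sum smooth_on_scaleR smooth_on_frechet_derivative)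
  fix x assume "x \<in> S"
  then have "linear (frechet_derivative f (at x))"
    using smooth_on_has_derivative[OF assms(2)] has_derivative_linear by blast
  then have "frechet_derivative f (at x) (\<Sum>i\<in>Basis. (V x \<bullet> i) *\<^sub>R i)
      = (\<Sum>i\<in>Basis. (V x \<bullet> i) *\<^sub>R frechet_derivative f (at x) i)"
    by (simp add: linear_sum linear_cmul)
  then show "(\<Sum>i\<in>Basis. (V x \<bullet> i) *\<^sub>R frechet_derivative f (at x) i)
      = frechet_derivative f (at x) (V x)"
    by (simp add: euclidean_representation)
qed

section \<open>Curves\<close>

lemma vector_diff_chain_has_derivative:
  assumes "(f has_vector_derivative f') (at x)" "(g has_derivative g') (at (f x))"
  shows "((g \<circ> f) has_vector_derivative g' f') (at x)"
proof -
  have "(g \<circ> f has_derivative g' \<circ> (\<lambda>s. s *\<^sub>R f')) (at x)"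
    using diff_chain_at assms unfolding has_vector_derivative_def by blast
  moreover have "g' \<circ> (\<lambda>s. s *\<^sub>R f') = (\<lambda>s. s *\<^sub>R g' f')"
    using has_derivative_linear[OF assms(2)] by (auto simp: linear_cmul)
  ultimately show ?thesis
    unfolding has_vector_derivative_def by simp
qed

lemma smooth_on_compose_integral_curve:
  fixes \<gamma> :: "real \<Rightarrow> 'a::euclidean_space"
  assumes S: "open S" and V: "smooth_on S V" and h: "smooth_on S h"
    and \<gamma>: "\<And>t. (\<gamma> has_vector_derivative V (\<gamma> t)) (at t)"
  shows "smooth_on (\<gamma> -` S) (h \<circ> \<gamma>)"
proof -
  have "continuous_on UNIV \<gamma>"
    using \<gamma> has_vector_derivative_continuous continuous_at_imp_continuous_on by blast
  then have T: "open (\<gamma> -` S)"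
    using S open_vimage by blast
  have "smooth_on (\<gamma> -` S) F" if "smooth_on S g" "\<forall>t\<in>\<gamma> -` S. F t = g (\<gamma> t)" for F g
    using that
  proof (coinduction arbitrary: F g)
    case smooth_on
    \<comment> \<open>the derivative of g \<circ> \<gamma> is again of this form, with g replaced by ?H\<close>
    let ?H = "\<lambda>x. frechet_derivative g (at x) (V x)"
    have F': "(F has_vector_derivative ?H (\<gamma> t)) (at t)" if "t \<in> \<gamma> -` S" for t
    proof -
      have "(g \<circ> \<gamma> has_vector_derivative ?H (\<gamma> t)) (at t)"
        using that smooth_on(1) by (intro vector_diff_chain_has_derivative \<gamma> smooth_on_has_derivative) auto
      then show ?thesis
        unfolding has_vector_derivative_def
        by (rule has_derivative_transform_within_open[OF _ T that]) (use smooth_on(2) in auto)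
    qed
    have "frechet_derivative F (at t) s = s *\<^sub>R ?H (\<gamma> t)" if "t \<in> \<gamma> -` S" for t s
      using frechet_derivative_at[OF F'[OF that, unfolded has_vector_derivative_def], symmetric]
      by simp
    moreover have "smooth_on S (\<lambda>x. s *\<^sub>R ?H x)" for s
      using S V smooth_on(1)
      by (intro smooth_on_scaleR smooth_on_const smooth_on_frechet_derivative_apply)
    moreover have "\<forall>t\<in>\<gamma> -` S. F differentiable (at t)"
      using F' unfolding has_vector_derivative_def differentiable_def by blast
    ultimately show ?case
      by auto
  qed
  from this[OF h] show ?thesis by simp
qed

lemma tanh_line_vector_derivative:
  "((\<lambda>t. a + tanh t *\<^sub>R w) has_vector_derivative (1 - tanh t ^ 2) *\<^sub>R w) (at t)"
proof -
  have "((\<lambda>t. tanh t) has_real_derivative 1 - tanh t ^ 2) (at t)"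
    using has_field_derivative_tanh[OF cosh_real_nonzero DERIV_ident] by simp
  then show ?thesis
    by (auto intro!: derivative_eq_intros simp: has_real_derivative_iff_has_vector_derivative)
qed

(* tanh t is recovered from the point a + tanh t w by the affine functional l, so the factor
   1 - tanh^2 t of the velocity becomes a smooth function of the point. *)
lemma tanh_line_integral_curve:
  fixes a w :: "'a::euclidean_space"
  obtains V where "smooth_on UNIV V"
    and "\<And>t. ((\<lambda>t. a + tanh t *\<^sub>R w) has_vector_derivative V (a + tanh t *\<^sub>R w)) (at t)"
proof
  define l where "l x = (x - a) \<bullet> (w /\<^sub>R (w \<bullet> w))" for x
  have "smooth_on UNIV (\<lambda>x. x - a)"
    by (intro smooth_on_diff smooth_on_bounded_linear bounded_linear_ident smooth_on_const) simp
  then have l: "smooth_on UNIV l"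
    unfolding l_def by (rule smooth_on_compose_bounded_linear[OF open_UNIV bounded_linear_inner_left])
  have "smooth_on UNIV (\<lambda>x. l x * l x)"
    using smooth_on_scaleR[OF open_UNIV l l] by simp
  then show "smooth_on UNIV (\<lambda>x. (1 - l x * l x) *\<^sub>R w)"
    by (intro smooth_on_scaleR smooth_on_diff smooth_on_const open_UNIV)
  fix t
  have "(1 - tanh t ^ 2) *\<^sub>R w = (1 - l (a + tanh t *\<^sub>R w) * l (a + tanh t *\<^sub>R w)) *\<^sub>R w"
    by (cases "w = 0") (simp_all add: l_def power2_eq_square)
  with tanh_line_vector_derivative show "((\<lambda>t. a + tanh t *\<^sub>R w) has_vector_derivative
      (1 - l (a + tanh t *\<^sub>R w) * l (a + tanh t *\<^sub>R w)) *\<^sub>R w) (at t)"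
    by metis
qed

lemma tanh_line_in_ball:
  fixes a w :: "'a::real_normed_vector"
  assumes "norm w < r"
  shows "a + tanh t *\<^sub>R w \<in> ball a r"
proof -
  have "\<bar>tanh t\<bar> \<le> 1"
    using tanh_real_bounds[of t] by auto
  then have "norm (tanh t *\<^sub>R w) \<le> norm w"
    by (simp add: mult_left_le_one_le)
  then show ?thesis
    using assms by (simp add: dist_norm)
qed

lemma has_vector_derivative_in_tangent_cone:
  fixes g :: "real \<Rightarrow> 'a::real_normed_vector"
  assumes g: "(g has_vector_derivative v) (at 0)" and X: "\<And>t. t > 0 \<Longrightarrow> g t \<in> X"
  shows "v \<in> tangent_cone X (g 0)"
proof -
  define \<tau> where "\<tau> i = inverse (real (Suc i))" for i
  have \<tau>: "\<tau> i > 0" for i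
    by (simp add: \<tau>_def)
  have lim: "((\<lambda>h. norm (g h - g 0 - h *\<^sub>R v) / norm h) \<longlongrightarrow> 0) (at 0)"
    using g unfolding has_vector_derivative_def has_derivative_at by simp
  have "\<forall>i. \<tau> i \<in> UNIV - {0}"
    by (simp add: \<tau>_def)
  moreover have \<tau>_lim: "\<tau> \<longlonglongrightarrow> 0"
    unfolding \<tau>_def by (rule LIMSEQ_inverse_real_of_nat)
  ultimately have "(\<lambda>i. norm (g (\<tau> i) - g 0 - \<tau> i *\<^sub>R v) / norm (\<tau> i)) \<longlonglongrightarrow> 0"
    using tendsto_at_iff_sequentially[THEN iffD1, OF lim, rule_format] by (simp add: o_def)
  moreover have "norm (g (\<tau> i) - g 0 - \<tau> i *\<^sub>R v) / norm (\<tau> i)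
      = norm ((1 / \<tau> i) *\<^sub>R (g (\<tau> i) - g 0) - v)" for i
  proof -
    have "(1 / \<tau> i) *\<^sub>R (g (\<tau> i) - g 0) - v = (1 / \<tau> i) *\<^sub>R (g (\<tau> i) - g 0 - \<tau> i *\<^sub>R v)"
      using \<tau>[of i] by (simp add: scaleR_diff_right)
    then show ?thesis
      using \<tau>[of i] by simp
  qed
  ultimately have "(\<lambda>i. norm ((1 / \<tau> i) *\<^sub>R (g (\<tau> i) - g 0) - v)) \<longlonglongrightarrow> 0"
    by simp
  then have "(\<lambda>i. (1 / \<tau> i) *\<^sub>R (g (\<tau> i) - g 0)) \<longlonglongrightarrow> v"
    by (simp add: tendsto_norm_zero_iff flip: Lim_null)
  moreover have "\<forall>i. g (\<tau> i) \<in> X"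
    using X \<tau> by blast
  ultimately show ?thesis
    unfolding tangent_cone_def using \<tau> \<tau>_lim
    by (intro CollectI exI[of _ "\<lambda>i. g (\<tau> i)"] exI[of _ \<tau>]) simp
qed

lemma subspace_separating_inner:
  fixes v :: "'a::euclidean_space"
  assumes "subspace W" "v \<notin> W"
  obtains z where "\<And>w. w \<in> W \<Longrightarrow> z \<bullet> w = 0" "z \<bullet> v > 0"
proof -
  obtain p z where p: "p \<in> span W" and z: "\<And>w. w \<in> span W \<Longrightarrow> orthogonal z w" and v: "v = p + z"
    by (rule orthogonal_subspace_decomp_exists[of W v]) blast
  have "span W = W"
    using assms(1) by simp
  then have "z \<noteq> 0"
    using assms(2) p v by (metis add.right_neutral)
  moreover have "z \<bullet> p = 0"
    using z[OF p] by (simp add: orthogonal_def)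
  ultimately have "z \<bullet> v > 0"
    by (simp add: v inner_add_right)
  moreover have "z \<bullet> w = 0" if "w \<in> W" for w
    using z[of w] that span_base by (auto simp: orthogonal_def)
  ultimately show ?thesis
    using that by blast
qed

section \<open>Charts\<close>

lemma smooth_atlas_chart:
  assumes "smooth_atlas A" "(U, \<psi>) \<in> A"
  shows "open U" "open (\<psi> ` U)" "homeomorphism U (\<psi> ` U) \<psi> (inv_into U \<psi>)"
  using assms unfolding smooth_atlas_def by auto

lemma smooth_atlas_inv_chart:
  assumes "smooth_atlas A" "(U, \<psi>) \<in> A" "x \<in> U"
  shows "inv_into U \<psi> (\<psi> x) = x"
  using smooth_atlas_chart(3)[OF assms(1,2)] assms(3) by (simp add: homeomorphism_def)

lemma smooth_atlas_transition:
  assumes "smooth_atlas A" "(U, \<psi>) \<in> A" "(V, \<theta>) \<in> A"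
  shows "smooth_on (\<psi> ` (U \<inter> V)) (\<theta> \<circ> inv_into U \<psi>)"
  using assms unfolding smooth_atlas_def by auto

lemma smooth_curve_chart_integral_curve:
  assumes A: "smooth_atlas A" and chart: "(U, \<psi>) \<in> A" and range: "range \<gamma> \<subseteq> \<psi> ` U"
    and V: "smooth_on (\<psi> ` U) V" and \<gamma>: "\<And>t. (\<gamma> has_vector_derivative V (\<gamma> t)) (at t)"
  shows "smooth_curve A (inv_into U \<psi> \<circ> \<gamma>)"
  unfolding smooth_curve_def
proof (intro conjI ballI)
  note hom = smooth_atlas_chart(3)[OF A chart]
  have "continuous_on (\<psi> ` U) (inv_into U \<psi>)"
    using hom by (simp add: homeomorphism_def)
  moreover have "continuous_on UNIV \<gamma>"
    using \<gamma> has_vector_derivative_continuous continuous_at_imp_continuous_on by blast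
  ultimately show "continuous_on UNIV (inv_into U \<psi> \<circ> \<gamma>)"
    unfolding o_def using range by (rule continuous_on_compose2)
  fix chart' assume "chart' \<in> A"
  then obtain U' \<theta> where chart': "chart' = (U', \<theta>)" "(U', \<theta>) \<in> A"
    by (cases chart') auto
  define S where "S = \<psi> ` (U \<inter> U')"
  have "openin (top_of_set (\<psi> ` U)) S"
    unfolding S_def
    by (intro homeomorphism_imp_open_map[OF hom] openin_open_Int smooth_atlas_chart(1)[OF A chart'(2)])
  then have S: "open S"
    using smooth_atlas_chart(2)[OF A chart] openin_open_trans by blast
  have "smooth_on (\<gamma> -` S) ((\<theta> \<circ> inv_into U \<psi>) \<circ> \<gamma>)"
  proof (rule smooth_on_compose_integral_curve[OF S _ _ \<gamma>])
    show "smooth_on S V"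
      using V by (rule smooth_on_subset) (auto simp: S_def)
    show "smooth_on S (\<theta> \<circ> inv_into U \<psi>)"
      unfolding S_def by (rule smooth_atlas_transition[OF A chart chart'(2)])
  qed
  moreover have "\<gamma> -` S = (inv_into U \<psi> \<circ> \<gamma>) -` U'"
  proof -
    have "\<gamma> t \<in> S \<longleftrightarrow> inv_into U \<psi> (\<gamma> t) \<in> U'" for t
    proof -
      obtain u where "u \<in> U" "\<gamma> t = \<psi> u"
        using range by blast
      then show ?thesis
        unfolding S_def using smooth_atlas_inv_chart[OF A chart] by auto metis
    qed
    then show ?thesis
      by auto
  qed
  ultimately show "case chart' of (U', \<theta>) \<Rightarrow>
      smooth_on ((inv_into U \<psi> \<circ> \<gamma>) -` U') (\<theta> \<circ> (inv_into U \<psi> \<circ> \<gamma>))"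
    using chart'(1) by (simp add: o_assoc)
qed

lemma smooth_atlas_covers:
  assumes "smooth_atlas A"
  obtains U \<psi> where "(U, \<psi>) \<in> A" "y \<in> U"
proof -
  have "y \<in> \<Union>(fst ` A)"
    using assms unfolding smooth_atlas_def by simp
  then obtain chart where "chart \<in> A" "y \<in> fst chart"
    by blast
  then show thesis
    using that by (cases chart) simp
qed

lemma diff_image_in_chart:
  assumes "smooth_atlas A"
  obtains U \<psi> where "(U, \<psi>) \<in> A" "y \<in> U"
    and "diff_image A \<phi> y = range (frechet_derivative (\<phi> \<circ> inv_into U \<psi>) (at (\<psi> y)))"
proof -
  let ?P = "\<lambda>W. \<exists>(U, \<psi>)\<in>A. y \<in> U \<and> W = range (frechet_derivative (\<phi> \<circ> inv_into U \<psi>) (at (\<psi> y)))"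
  obtain U \<psi> where "(U, \<psi>) \<in> A" "y \<in> U"
    using smooth_atlas_covers[OF assms] .
  then have "?P (range (frechet_derivative (\<phi> \<circ> inv_into U \<psi>) (at (\<psi> y))))"
    by blast
  then have "?P (diff_image A \<phi> y)"
    unfolding diff_image_def by (rule someI)
  then obtain U' \<psi>' where "(U', \<psi>') \<in> A" "y \<in> U'"
    and "diff_image A \<phi> y = range (frechet_derivative (\<phi> \<circ> inv_into U' \<psi>') (at (\<psi>' y)))"
    by blast
  then show thesis
    by (rule that)
qed

lemma not_one_to_one_if_linear_counterexample:
  fixes f :: "'e::euclidean_space \<Rightarrow> real"
  assumes "linear f" "one_critical A (f \<circ> \<phi>) y" "\<not> stationary f (range \<phi>) (\<phi> y)"
  shows "\<not> one_to_one A \<phi> y"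
proof -
  have "\<forall>x. f differentiable (at x)"
    using assms(1) by (simp add: linear_conv_bounded_linear bounded_linear_imp_differentiable)
  then show ?thesis
    using assms(2,3) unfolding one_to_one_def by blast
qed

section \<open>The differential of a lift, read in a chart\<close>

locale lift_chart =
  fixes A :: "('m::topological_space set \<times> ('m \<Rightarrow> 'n::euclidean_space)) set"
    and \<phi> :: "'m \<Rightarrow> 'e::euclidean_space" and U :: "'m set" and \<psi> :: "'m \<Rightarrow> 'n" and y :: 'm
  assumes atlas: "smooth_atlas A" and smooth: "smooth_map A \<phi>"
    and chart: "(U, \<psi>) \<in> A" and y_in_U: "y \<in> U"
begin

definition D\<phi> :: "'n \<Rightarrow> 'e" where
  "D\<phi> = frechet_derivative (\<phi> \<circ> inv_into U \<psi>) (at (\<psi> y))"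

lemmas inv_chart = smooth_atlas_inv_chart[OF atlas chart]

lemma has_derivative_D\<phi>: "((\<phi> \<circ> inv_into U \<psi>) has_derivative D\<phi>) (at (\<psi> y))"
proof -
  have "smooth_on (\<psi> ` U) (\<phi> \<circ> inv_into U \<psi>)"
    using smooth chart unfolding smooth_map_def by blast
  then show ?thesis
    unfolding D\<phi>_def using y_in_U by (blast intro: smooth_on_has_derivative)
qed

lemma linear_D\<phi>: "linear D\<phi>"
  using has_derivative_D\<phi> has_derivative_linear by blast

lemma range_D\<phi>_subset_tangent_cone: "range D\<phi> \<subseteq> tangent_cone (range \<phi>) (\<phi> y)"
proof clarify
  fix w
  let ?g = "\<lambda>t. (\<phi> \<circ> inv_into U \<psi>) (\<psi> y + t *\<^sub>R w)"
  have "((\<lambda>t. \<psi> y + t *\<^sub>R w) has_vector_derivative w) (at 0)"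
    by (auto intro!: derivative_eq_intros)
  then have "(?g has_vector_derivative D\<phi> w) (at 0)"
    using vector_diff_chain_has_derivative has_derivative_D\<phi> unfolding o_def by fastforce
  moreover have "?g 0 = \<phi> y"
    by (simp add: inv_chart y_in_U)
  ultimately show "D\<phi> w \<in> tangent_cone (range \<phi>) (\<phi> y)"
    using has_vector_derivative_in_tangent_cone[of ?g "D\<phi> w" "range \<phi>"] by simp
qed

lemma curve_velocity_in_range_D\<phi>:
  assumes "smooth_curve A c" "c 0 = y"
  obtains u where "((\<phi> \<circ> c) has_vector_derivative D\<phi> u) (at 0)"
proof -
  have "continuous_on UNIV c" and "smooth_on (c -` U) (\<psi> \<circ> c)"
    using assms(1) chart unfolding smooth_curve_def by auto
  moreover have "open (c -` U)"
    using open_vimage smooth_atlas_chart(1)[OF atlas chart] \<open>continuous_on UNIV c\<close> by blast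
  moreover have "0 \<in> c -` U"
    using assms(2) y_in_U by simp
  ultimately have "((\<psi> \<circ> c) has_vector_derivative vector_derivative (\<psi> \<circ> c) (at 0)) (at 0)"
    by (simp add: smooth_on_differentiable vector_derivative_works[symmetric])
  moreover have "((\<phi> \<circ> inv_into U \<psi>) has_derivative D\<phi>) (at ((\<psi> \<circ> c) 0))"
    using assms(2) has_derivative_D\<phi> by simp
  ultimately have "((\<phi> \<circ> inv_into U \<psi>) \<circ> (\<psi> \<circ> c) has_vector_derivative
      D\<phi> (vector_derivative (\<psi> \<circ> c) (at 0))) (at 0)"
    by (rule vector_diff_chain_has_derivative)
  then have "((\<phi> \<circ> c) has_vector_derivative D\<phi> (vector_derivative (\<psi> \<circ> c) (at 0))) (at 0)"
    unfolding has_vector_derivative_def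
    by (rule has_derivative_transform_within_open[OF _ \<open>open (c -` U)\<close> \<open>0 \<in> c -` U\<close>])
       (simp add: inv_chart)
  then show thesis
    by (rule that)
qed

lemma D\<phi>_realised_by_curve:
  obtains c k where "smooth_curve A c" "c 0 = y" "k > 0"
    and "((\<phi> \<circ> c) has_vector_derivative k *\<^sub>R D\<phi> w) (at 0)"
proof -
  obtain r where r: "r > 0" "ball (\<psi> y) r \<subseteq> \<psi> ` U"
    using smooth_atlas_chart(2)[OF atlas chart] y_in_U open_contains_ball by blast
  define k where "k = r / (norm w + 1)"
  have k: "k > 0"
    using r(1) by (simp add: k_def add_nonneg_pos)
  have "norm (k *\<^sub>R w) < r"
    using r(1) add_pos_nonneg[of 1 "norm w"] by (simp add: k_def field_simps)
  \<comment> \<open>curves are defined on all of the real line; tanh keeps this one inside the chart\<close>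
  define \<gamma> where "\<gamma> t = \<psi> y + tanh t *\<^sub>R (k *\<^sub>R w)" for t
  obtain V where V: "smooth_on UNIV V" and \<gamma>': "\<And>t. (\<gamma> has_vector_derivative V (\<gamma> t)) (at t)"
    unfolding \<gamma>_def using tanh_line_integral_curve[of "\<psi> y" "k *\<^sub>R w"] by blast
  have "range \<gamma> \<subseteq> \<psi> ` U"
    using r(2) tanh_line_in_ball[OF \<open>norm (k *\<^sub>R w) < r\<close>] unfolding \<gamma>_def by blast
  moreover have "smooth_on (\<psi> ` U) V"
    using V by (rule smooth_on_subset) simp
  ultimately have curve: "smooth_curve A (inv_into U \<psi> \<circ> \<gamma>)"
    using \<gamma>' by (rule smooth_curve_chart_integral_curve[OF atlas chart])
  have "\<gamma> 0 = \<psi> y"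
    by (simp add: \<gamma>_def)
  then have start: "(inv_into U \<psi> \<circ> \<gamma>) 0 = y"
    by (simp add: inv_chart y_in_U)
  have "((\<phi> \<circ> (inv_into U \<psi> \<circ> \<gamma>)) has_vector_derivative k *\<^sub>R D\<phi> w) (at 0)"
  proof -
    have "(\<gamma> has_vector_derivative k *\<^sub>R w) (at 0)"
      using tanh_line_vector_derivative[of "\<psi> y" "k *\<^sub>R w" 0] unfolding \<gamma>_def by simp
    then have "((\<phi> \<circ> inv_into U \<psi>) \<circ> \<gamma> has_vector_derivative D\<phi> (k *\<^sub>R w)) (at 0)"
      by (rule vector_diff_chain_has_derivative) (simp only: \<open>\<gamma> 0 = \<psi> y\<close> has_derivative_D\<phi>)
    then show ?thesis
      by (simp add: o_assoc linear_cmul[OF linear_D\<phi>])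
  qed
  with curve start k show thesis
    by (rule that)
qed

lemma one_to_one_if_range_D\<phi>_eq:
  assumes "range D\<phi> = tangent_cone (range \<phi>) (\<phi> y)"
  shows "one_to_one A \<phi> y"
  unfolding one_to_one_def
proof (intro allI impI)
  fix f :: "'e \<Rightarrow> real"
  assume "\<forall>x. f differentiable (at x)" and critical: "one_critical A (f \<circ> \<phi>) y"
  then have f': "(f has_derivative frechet_derivative f (at (\<phi> y))) (at (\<phi> y))"
    using frechet_derivative_works by blast
  have "frechet_derivative f (at (\<phi> y)) (D\<phi> w) = 0" for w
  proof -
    obtain c k where c: "smooth_curve A c" "c 0 = y" "k > 0"
      and \<phi>c: "((\<phi> \<circ> c) has_vector_derivative k *\<^sub>R D\<phi> w) (at 0)"
      by (rule D\<phi>_realised_by_curve)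
    have "(f \<circ> (\<phi> \<circ> c) has_vector_derivative frechet_derivative f (at (\<phi> y)) (k *\<^sub>R D\<phi> w)) (at 0)"
      using \<phi>c by (rule vector_diff_chain_has_derivative) (simp add: f' c(2))
    moreover have "((f \<circ> \<phi>) \<circ> c has_vector_derivative 0) (at 0)"
      using critical c unfolding one_critical_def has_real_derivative_iff_has_vector_derivative by blast
    ultimately have "frechet_derivative f (at (\<phi> y)) (k *\<^sub>R D\<phi> w) = 0"
      by (simp add: o_assoc vector_derivative_unique_at)
    then show ?thesis
      using c(3) linear_cmul[OF has_derivative_linear[OF f']] by simp
  qed
  then show "stationary f (range \<phi>) (\<phi> y)"
    unfolding stationary_def assms[symmetric] by auto
qed

lemma linear_counterexample_if_range_D\<phi>_ne:
  assumes "range D\<phi> \<noteq> tangent_cone (range \<phi>) (\<phi> y)"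
  shows "\<exists>f::'e \<Rightarrow> real.
    linear f \<and> one_critical A (f \<circ> \<phi>) y \<and> \<not> stationary f (range \<phi>) (\<phi> y)"
proof -
  obtain v where v: "v \<in> tangent_cone (range \<phi>) (\<phi> y)" "v \<notin> range D\<phi>"
    using assms range_D\<phi>_subset_tangent_cone by blast
  obtain z where "\<And>w. w \<in> range D\<phi> \<Longrightarrow> z \<bullet> w = 0" and "z \<bullet> v > 0"
    using subspace_separating_inner[OF linear_subspace_image[OF linear_D\<phi> subspace_UNIV] v(2)]
    by blast
  then have z: "z \<bullet> D\<phi> u = 0" for u
    by simp
  define f where "f e = - (z \<bullet> e)" for e
  have f: "bounded_linear f"
    unfolding f_def by (intro bounded_linear_minus bounded_linear_inner_right)
  have f': "frechet_derivative f (at x) = f" for x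
    using frechet_derivative_at[OF bounded_linear_imp_has_derivative[OF f]] by simp
  have "f v < 0"
    using \<open>z \<bullet> v > 0\<close> by (simp add: f_def)
  then have not_stationary: "\<not> stationary f (range \<phi>) (\<phi> y)"
    unfolding stationary_def f' using v(1) by fastforce
  have "one_critical A (f \<circ> \<phi>) y"
    unfolding one_critical_def has_real_derivative_iff_has_vector_derivative
  proof (intro allI impI, elim conjE)
    fix c assume "smooth_curve A c" "c 0 = y"
    then obtain u where "((\<phi> \<circ> c) has_vector_derivative D\<phi> u) (at 0)"
      by (rule curve_velocity_in_range_D\<phi>)
    from vector_diff_chain_has_derivative[OF this bounded_linear_imp_has_derivative[OF f]]
    show "((f \<circ> \<phi>) \<circ> c has_vector_derivative 0) (at 0)"
      by (simp add: o_assoc f_def z)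
  qed
  then show ?thesis
    using f bounded_linear.linear not_stationary by blast
qed

end

theorem theorem2p4:
  fixes A :: "('m::{t2_space, second_countable_topology} set \<times> ('m \<Rightarrow> 'n::euclidean_space)) set"
    and \<phi> :: "'m \<Rightarrow> 'e::euclidean_space"
    and y :: 'm
  assumes "smooth_atlas A"
    and "smooth_map A \<phi>"
  shows "(one_to_one A \<phi> y \<longleftrightarrow> diff_image A \<phi> y = tangent_cone (range \<phi>) (\<phi> y))
       \<and> (\<not> one_to_one A \<phi> y \<longrightarrow>
            (\<exists>f::'e \<Rightarrow> real. linear f \<and> one_critical A (f \<circ> \<phi>) y
                 \<and> \<not> stationary f (range \<phi>) (\<phi> y)))"
proof -
  obtain U \<psi> where chart: "(U, \<psi>) \<in> A" "y \<in> U"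
    and image: "diff_image A \<phi> y = range (frechet_derivative (\<phi> \<circ> inv_into U \<psi>) (at (\<psi> y)))"
    by (rule diff_image_in_chart[OF assms(1)])
  interpret lift_chart A \<phi> U \<psi> y
    using assms chart by unfold_locales
  have image_D\<phi>: "diff_image A \<phi> y = range D\<phi>"
    using image by (simp add: D\<phi>_def)
  show ?thesis
  proof (cases "range D\<phi> = tangent_cone (range \<phi>) (\<phi> y)")
    case True
    then show ?thesis
      using image_D\<phi> one_to_one_if_range_D\<phi>_eq by simp
  next
    case False
    then show ?thesis
      using image_D\<phi> linear_counterexample_if_range_D\<phi>_ne[OF False]
        not_one_to_one_if_linear_counterexample by blast
  qed
qed

end
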